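(* Let $k$ be a field, $n\ge 2$, and $d_1,\ldots,d_n$ positive integers. The algebra $A=k[x_1, \ldots, x_n]/(x_1^{d_1}, \ldots, x_n^{d_n})$ has the weak Lefschetz property if and only if multiplication by $(x_1+ \dots + x_{n-1})^{d_n}$ has maximal rank in every degree on $B=k[x_1, \ldots, x_{n-1}]/(x_1^{d_1}, \ldots, x_{n-1}^{d_{n-1}})$, i.e. for every $i$ the map $B_i\to B_{i+d_n}$, $b\mapsto (x_1+\cdots+x_{n-1})^{d_n}b$, is injective or surjective.
   Context: Algebras are graded by degree, $A=\bigoplus_{i\ge0}A_i$. A graded artinian algebra $A$ has the weak Lefschetz property if there is a linear form $\ell\in A_1$ such that for every $i$ the map $A_i\to A_{i+1}$, $a\mapsto \ell a$, is injective or surjective. *)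

theory Defs
  imports Main
begin

text \<open>Concrete model of the monomial complete intersection
  A = k[x_0,...,x_{n-1}]/(x_0^{d_0},...,x_{n-1}^{d_{n-1}}).
  Monomials are exponent vectors a :: nat => nat supported on {..<n};
  the standard monomials (those not in the ideal) are the ones with a i < d i.
  An element of A is a k-valued coefficient function on standard monomials
  (a k-linear combination of the residue classes of standard monomials, which
  form a k-basis of A).\<close>

definition box :: "nat \<Rightarrow> (nat \<Rightarrow> nat) \<Rightarrow> (nat \<Rightarrow> nat) set" where
  "box n d = {a. (\<forall>i<n. a i < d i) \<and> (\<forall>i. n \<le> i \<longrightarrow> a i = 0)}"

definition mdeg :: "nat \<Rightarrow> (nat \<Rightarrow> nat) \<Rightarrow> nat" where
  "mdeg n a = (\<Sum>i<n. a i)"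

definition graded_piece :: "nat \<Rightarrow> (nat \<Rightarrow> nat) \<Rightarrow> nat \<Rightarrow> ((nat \<Rightarrow> nat) \<Rightarrow> 'k::zero) set" where
  "graded_piece n d j = {f. \<forall>a. f a \<noteq> 0 \<longrightarrow> a \<in> box n d \<and> mdeg n a = j}"

text \<open>Multiplication in A by the linear form c_0 x_0 + ... + c_{n-1} x_{n-1}:
  the coefficient of x^m in the product is sum_i c_i * (coefficient of x^(m - e_i)),
  and monomials outside the box vanish in the quotient.\<close>
definition lin_mult :: "nat \<Rightarrow> (nat \<Rightarrow> nat) \<Rightarrow> (nat \<Rightarrow> 'k::comm_ring_1)
    \<Rightarrow> ((nat \<Rightarrow> nat) \<Rightarrow> 'k) \<Rightarrow> ((nat \<Rightarrow> nat) \<Rightarrow> 'k)" where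
  "lin_mult n d c f = (\<lambda>m. if m \<in> box n d
      then (\<Sum>i<n. if 0 < m i then c i * f (m(i := m i - 1)) else 0) else 0)"

definition has_WLP :: "'k::field itself \<Rightarrow> nat \<Rightarrow> (nat \<Rightarrow> nat) \<Rightarrow> bool" where
  "has_WLP _ n d \<longleftrightarrow> (\<exists>c :: nat \<Rightarrow> 'k. \<forall>j.
      inj_on (lin_mult n d c) (graded_piece n d j)
      \<or> lin_mult n d c ` graded_piece n d j = graded_piece n d (Suc j))"

end

theory Submission
  imports Defs "HOL.Modules" "HOL-Library.Function_Algebras"
begin

text \<open>Let A be the algebra in x_0, ..., x_N and B the one in x_0, ..., x_(N-1), so that
  A = B[x_N]/(x_N^D) with D = d N, and let L be multiplication by x_0 + ... + x_(N-1) on B.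
  Multiplication by x_0 + ... + x_N sends f = \<Sum>t<D. x_N^t f_t (with f_t in B) to the element
  with coefficients L f_t + f_(t-1). If these vanish for 0 < t < D, then
  f_t = (-L)^(D-1-t) f_(D-1), and the constant coefficient is (-1)^(D-1) L^D f_(D-1).
  Hence x_0 + ... + x_N is injective (surjective) from A_j to A_(j+1) iff L^D is injective
  (surjective) from B_(j+1-D) to B_(j+1), injectivity being automatic when j + 1 < D.

  Nothing is lost by testing the weak Lefschetz property on x_0 + ... + x_N only: nonzero
  coefficients of a linear form are normalised to 1 by rescaling the variables, and replacing the
  zero coefficients by 1 adds to the multiplication map a term that raises the degree in the
  corresponding variables, a deformation under which maximal rank persists.\<close>

section \<open>Coefficient functions as a module\<close>

type_synonym 'k coeff_fun = "(nat \<Rightarrow> nat) \<Rightarrow> 'k"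

interpretation fun_module: module "\<lambda>s (f :: 'a \<Rightarrow> 'k::comm_ring_1) x. s * f x"
  by unfold_locales (auto simp: fun_eq_iff algebra_simps)

abbreviation fun_linear :: "(('a \<Rightarrow> 'k::comm_ring_1) \<Rightarrow> ('b \<Rightarrow> 'k)) \<Rightarrow> bool" where
  "fun_linear \<equiv> module_hom (\<lambda>s f x. s * f x) (\<lambda>s f x. s * f x)"

lemma fun_linear_funpow:
  fixes F :: "('a \<Rightarrow> 'k::comm_ring_1) \<Rightarrow> ('a \<Rightarrow> 'k)"
  assumes "fun_linear F"
  shows "fun_linear (F ^^ k)"
proof (induction k)
  case 0
  show ?case by (simp add: module_hom_iff fun_module.module_axioms id_def)
next
  case (Suc k)
  show ?case
    using module_hom_compose[OF Suc assms] by (simp only: funpow.simps)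
qed

lemma sum_fun_apply: "(\<Sum>a\<in>A. f a) x = (\<Sum>a\<in>A. f a x)"
  by (induction A rule: infinite_finite_induct) simp_all

definition max_rank :: "('a \<Rightarrow> 'b) \<Rightarrow> 'a set \<Rightarrow> 'b set \<Rightarrow> bool" where
  "max_rank F X Y \<longleftrightarrow> inj_on F X \<or> F ` X = Y"

lemma max_rank_conj:
  assumes \<sigma>: "bij_betw \<sigma> X' X" and \<tau>: "bij_betw \<tau> Y' Y" and G: "G ` X' \<subseteq> Y'"
    and comm: "\<And>x. x \<in> X' \<Longrightarrow> F (\<sigma> x) = \<tau> (G x)"
    and "max_rank F X Y"
  shows "max_rank G X' Y'"
proof -
  have "inj_on G X'" if "inj_on F X"
  proof -
    have "inj_on (F \<circ> \<sigma>) X'"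
      using \<sigma> that by (simp add: bij_betw_def comp_inj_on)
    then have "inj_on (\<tau> \<circ> G) X'"
      using comm by (simp add: inj_on_def)
    then show ?thesis by (rule inj_on_imageI2)
  qed
  moreover have "G ` X' = Y'" if "F ` X = Y"
  proof -
    have "\<tau> ` (G ` X') = F ` (\<sigma> ` X')"
      unfolding image_image using comm by (simp cong: image_cong)
    then have "\<tau> ` (G ` X') = \<tau> ` Y'"
      using \<sigma> \<tau> that by (simp add: bij_betw_def)
    then show ?thesis
      using \<tau> G by (metis bij_betw_def inj_on_image_eq_iff order_refl)
  qed
  ultimately show ?thesis
    using \<open>max_rank F X Y\<close> unfolding max_rank_def by blast
qed

lemma graded_piece_supp_mono:
  assumes "h \<in> graded_piece n d j" and "\<And>m. g m \<noteq> 0 \<Longrightarrow> h m \<noteq> 0"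
  shows "g \<in> graded_piece n d j"
  using assms by (auto simp: graded_piece_def)

lemma subspace_graded_piece: "fun_module.subspace (graded_piece n d j)"
  unfolding fun_module.subspace_def graded_piece_def
  by (auto, (metis add.left_neutral add.right_neutral mult_zero_right)+)

lemma fun_linear_lin_mult: "fun_linear (lin_mult n d c)"
  by (auto simp: module_hom_iff fun_module.module_axioms lin_mult_def fun_eq_iff
      sum.distrib[symmetric] sum_distrib_left algebra_simps intro!: sum.cong)

abbreviation sum_vars_mult ::
    "nat \<Rightarrow> (nat \<Rightarrow> nat) \<Rightarrow> 'k::comm_ring_1 coeff_fun \<Rightarrow> 'k coeff_fun" where
  "sum_vars_mult n d \<equiv> lin_mult n d (\<lambda>_. 1)"

lemma lin_mult_coeff_add: "lin_mult n d (c + c') h = lin_mult n d c h + lin_mult n d c' h"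
  by (auto simp: lin_mult_def fun_eq_iff sum.distrib[symmetric] algebra_simps intro!: sum.cong)

lemma lin_mult_nonzeroE:
  assumes "lin_mult n d c f m \<noteq> 0"
  obtains i where "i < n" "0 < m i" "c i \<noteq> 0" "f (m(i := m i - 1)) \<noteq> 0" "m \<in> box n d"
proof -
  have "m \<in> box n d" using assms by (auto simp: lin_mult_def split: if_splits)
  moreover have "\<exists>i<n. 0 < m i \<and> c i * f (m(i := m i - 1)) \<noteq> 0"
  proof (rule ccontr)
    assume "\<not> ?thesis"
    then have "lin_mult n d c f m = 0" by (auto simp: lin_mult_def intro!: sum.neutral)
    with assms show False by contradiction
  qed
  ultimately show ?thesis
    using that by (metis mult_zero_left mult_zero_right)
qed

lemma mdeg_decr:
  assumes "i < n" "0 < m i"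
  shows "mdeg n m = Suc (mdeg n (m(i := m i - 1)))"
proof -
  have "mdeg n m = m i + (\<Sum>k\<in>{..<n}-{i}. m k)"
    unfolding mdeg_def using assms by (simp add: sum.remove)
  moreover have "mdeg n (m(i := m i - 1)) = (m i - 1) + (\<Sum>k\<in>{..<n}-{i}. m k)"
    unfolding mdeg_def using assms by (simp add: sum.remove)
  ultimately show ?thesis using assms by simp
qed

lemma lin_mult_graded:
  assumes "f \<in> graded_piece n d j"
  shows "lin_mult n d c f \<in> graded_piece n d (Suc j)"
  unfolding graded_piece_def
proof (intro CollectI allI impI)
  fix m assume "lin_mult n d c f m \<noteq> 0"
  then obtain i where i: "i < n" "0 < m i" "f (m(i := m i - 1)) \<noteq> 0" and "m \<in> box n d"
    by (rule lin_mult_nonzeroE)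
  with assms mdeg_decr[of i n m] show "m \<in> box n d \<and> mdeg n m = Suc j"
    by (simp add: graded_piece_def)
qed

lemma funpow_lin_mult_graded:
  "f \<in> graded_piece n d j \<Longrightarrow> (lin_mult n d c ^^ k) f \<in> graded_piece n d (j + k)"
  by (induction k) (auto simp: lin_mult_graded)

section \<open>Rescaling the variables\<close>

definition monom_val :: "nat \<Rightarrow> (nat \<Rightarrow> 'k::comm_ring_1) \<Rightarrow> (nat \<Rightarrow> nat) \<Rightarrow> 'k" where
  "monom_val n c m = (\<Prod>k<n. c k ^ m k)"

lemma monom_val_decr:
  assumes "i < n" "0 < m i"
  shows "c i * monom_val n c (m(i := m i - 1)) = monom_val n c m"
proof -
  have "monom_val n c m = c i ^ m i * (\<Prod>k\<in>{..<n}-{i}. c k ^ m k)"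
    unfolding monom_val_def using assms by (simp add: prod.remove)
  moreover have "monom_val n c (m(i := m i - 1)) = c i ^ (m i - 1) * (\<Prod>k\<in>{..<n}-{i}. c k ^ m k)"
    unfolding monom_val_def using assms by (simp add: prod.remove)
  moreover have "c i * c i ^ (m i - 1) = c i ^ m i"
    using assms(2) by (simp add: power_eq_if)
  ultimately show ?thesis by (simp add: mult.assoc[symmetric])
qed

text \<open>The substitution x_i \<mapsto> c_i x_i carries x_0 + ... + x_(n-1) to the form with
  coefficients c; on coefficient functions it is multiplication by monom_val n c.\<close>
lemma lin_mult_monom_val:
  "lin_mult n d c (monom_val n c * h) = monom_val n c * sum_vars_mult n d h"
proof
  fix m
  have "(if 0 < m i then c i * (monom_val n c * h) (m(i := m i - 1)) else 0)
      = monom_val n c m * (if 0 < m i then 1 * h (m(i := m i - 1)) else 0)" if "i < n" for i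
    using monom_val_decr[of i n m c] that by (simp add: mult.assoc[symmetric])
  then show "lin_mult n d c (monom_val n c * h) m = (monom_val n c * sum_vars_mult n d h) m"
    by (simp add: lin_mult_def sum_distrib_left)
qed

lemma bij_betw_mult_graded_piece:
  fixes P :: "'k::field coeff_fun"
  assumes "\<And>m. P m \<noteq> 0"
  shows "bij_betw ((*) P) (graded_piece n d j) (graded_piece n d j)"
proof (rule bij_betw_byWitness[where f' = "\<lambda>h m. h m / P m"])
  show "(*) P ` graded_piece n d j \<subseteq> graded_piece n d j"
    and "(\<lambda>h m. h m / P m) ` graded_piece n d j \<subseteq> graded_piece n d j"
    by (auto elim!: graded_piece_supp_mono)
qed (use assms in \<open>auto simp: fun_eq_iff\<close>)

lemma max_rank_sum_vars_mult_if_nonzero_coeffs: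
  fixes c :: "nat \<Rightarrow> 'k::field"
  assumes "\<forall>i<n. c i \<noteq> 0"
    and "max_rank (lin_mult n d c) (graded_piece n d j) (graded_piece n d (Suc j))"
  shows "max_rank (sum_vars_mult n d) (graded_piece n d j) (graded_piece n d (Suc j) :: 'k coeff_fun set)"
proof -
  have "monom_val n c m \<noteq> 0" for m
    using assms(1) by (simp add: monom_val_def)
  then have bij: "bij_betw ((*) (monom_val n c)) (graded_piece n d i) (graded_piece n d i)" for i
    by (rule bij_betw_mult_graded_piece)
  show ?thesis
    by (rule max_rank_conj[OF bij bij]) (use assms lin_mult_graded lin_mult_monom_val in auto)
qed

section \<open>Linear forms with zero coefficients\<close>

definition zero_deg :: "nat \<Rightarrow> (nat \<Rightarrow> 'k::zero) \<Rightarrow> (nat \<Rightarrow> nat) \<Rightarrow> nat" where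
  "zero_deg n c m = (\<Sum>i<n. if c i = 0 then m i else 0)"

definition zero_deg_part ::
    "nat \<Rightarrow> (nat \<Rightarrow> 'k::zero) \<Rightarrow> nat \<Rightarrow> 'k coeff_fun \<Rightarrow> 'k coeff_fun" where
  "zero_deg_part n c E h = (\<lambda>m. if zero_deg n c m = E then h m else 0)"

lemma zero_deg_decr:
  assumes "i < n" "0 < m i" "c i = 0"
  shows "zero_deg n c m = Suc (zero_deg n c (m(i := m i - 1)))"
proof -
  have "zero_deg n c m = m i + (\<Sum>k\<in>{..<n}-{i}. if c k = 0 then m k else 0)"
    unfolding zero_deg_def using assms by (simp add: sum.remove)
  moreover have "zero_deg n c (m(i := m i - 1))
      = (m i - 1) + (\<Sum>k\<in>{..<n}-{i}. if c k = 0 then (m(i := m i - 1)) k else 0)"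
    unfolding zero_deg_def using assms by (simp add: sum.remove)
  moreover have "(\<Sum>k\<in>{..<n}-{i}. if c k = 0 then (m(i := m i - 1)) k else 0)
      = (\<Sum>k\<in>{..<n}-{i}. if c k = 0 then m k else 0)"
    by (intro sum.cong) auto
  ultimately show ?thesis using assms by simp
qed

lemma zero_deg_upd: "c i \<noteq> 0 \<Longrightarrow> zero_deg n c (m(i := v)) = zero_deg n c m"
  unfolding zero_deg_def by (intro sum.cong) auto

lemma zero_deg_le_mdeg: "zero_deg n c m \<le> mdeg n m"
  unfolding zero_deg_def mdeg_def by (intro sum_mono) auto

lemma zero_deg_part_graded:
  "h \<in> graded_piece n d j \<Longrightarrow> zero_deg_part n c E h \<in> graded_piece n d j"
  by (erule graded_piece_supp_mono) (simp add: zero_deg_part_def split: if_splits)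

lemma lin_mult_zero_deg_part:
  "lin_mult n d c (zero_deg_part n c E h) = zero_deg_part n c E (lin_mult n d c h)"
proof -
  have "(if 0 < m i then c i * (if zero_deg n c (m(i := m i - 1)) = E then h (m(i := m i - 1)) else 0) else 0)
      = (if zero_deg n c m = E then (if 0 < m i then c i * h (m(i := m i - 1)) else 0) else 0)" for m i
    by (cases "c i = 0") (simp_all add: zero_deg_upd)
  then show ?thesis
    unfolding lin_mult_def zero_deg_part_def by (simp add: fun_eq_iff)
qed

lemma lin_mult_zero_coeffs_nonzero:
  assumes "lin_mult n d (\<lambda>i. of_bool (c i = 0)) h m \<noteq> 0"
  shows "\<exists>m'. h m' \<noteq> 0 \<and> zero_deg n c m = Suc (zero_deg n c m')"
proof -
  obtain i where "i < n" "0 < m i" "of_bool (c i = 0) \<noteq> (0 :: 'a)" "h (m(i := m i - 1)) \<noteq> 0"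
    using assms by (rule lin_mult_nonzeroE)
  then show ?thesis using zero_deg_decr[of i n m c] by (auto split: if_splits)
qed

text \<open>The part of least zero-degree of a kernel element is killed by lin_mult n d c.\<close>
lemma inj_on_lin_mult_fill_zeros:
  assumes inj: "inj_on (lin_mult n d c) (graded_piece n d j)"
  shows "inj_on (lin_mult n d (c + (\<lambda>i. of_bool (c i = 0)))) (graded_piece n d j)"
  unfolding module_hom.inj_on_iff_eq_0[OF fun_linear_lin_mult subspace_graded_piece]
proof (intro ballI impI)
  fix h assume h: "h \<in> graded_piece n d j"
    and ker: "lin_mult n d (c + (\<lambda>i. of_bool (c i = 0))) h = 0"
  show "h = 0"
  proof (rule ccontr)
    assume "h \<noteq> 0"
    then obtain m0 where "h m0 \<noteq> 0"
      and least: "\<And>m. h m \<noteq> 0 \<Longrightarrow> zero_deg n c m0 \<le> zero_deg n c m"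
      using ex_has_least_nat[of "\<lambda>m. h m \<noteq> 0" _ "zero_deg n c"] by (auto simp: fun_eq_iff)
    define E where "E = zero_deg n c m0"
    have "zero_deg_part n c E (lin_mult n d c h) = 0"
    proof
      fix m
      have "lin_mult n d (\<lambda>i. of_bool (c i = 0)) h m = 0" if "zero_deg n c m = E"
        using lin_mult_zero_coeffs_nonzero[of n d c h m] least that unfolding E_def by fastforce
      then show "zero_deg_part n c E (lin_mult n d c h) m = 0 m"
        using fun_cong[OF ker, of m] by (auto simp: zero_deg_part_def lin_mult_coeff_add)
    qed
    then have "lin_mult n d c (zero_deg_part n c E h) = lin_mult n d c 0"
      by (simp add: lin_mult_zero_deg_part module_hom.zero[OF fun_linear_lin_mult])
    then have part0: "zero_deg_part n c E h = 0"
      using inj h by (auto dest: inj_onD intro: zero_deg_part_graded fun_module.subspace_0[OF subspace_graded_piece])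
    show False
      using fun_cong[OF part0, of m0] \<open>h m0 \<noteq> 0\<close> by (simp add: zero_deg_part_def E_def)
  qed
qed

lemma lin_mult_fill_zeros_step:
  assumes onto: "lin_mult n d c ` graded_piece n d j = graded_piece n d (Suc j)"
    and u: "u \<in> graded_piece n d (Suc j)" and supp: "\<forall>m. u m \<noteq> 0 \<longrightarrow> E \<le> zero_deg n c m"
  obtains w where "w \<in> graded_piece n d j"
    and "\<forall>m. (u - lin_mult n d (c + (\<lambda>i. of_bool (c i = 0))) w) m \<noteq> 0 \<longrightarrow> Suc E \<le> zero_deg n c m"
proof -
  obtain v where v: "v \<in> graded_piece n d j" "lin_mult n d c v = zero_deg_part n c E u"
    using onto zero_deg_part_graded[OF u] by (metis imageE)
  define w where "w = zero_deg_part n c E v"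
  have w: "w \<in> graded_piece n d j"
    unfolding w_def using v(1) by (rule zero_deg_part_graded)
  have Lw: "lin_mult n d c w = zero_deg_part n c E u"
    unfolding w_def lin_mult_zero_deg_part v(2) by (simp add: zero_deg_part_def fun_eq_iff)
  have "Suc E \<le> zero_deg n c m"
    if nz: "(u - lin_mult n d (c + (\<lambda>i. of_bool (c i = 0))) w) m \<noteq> 0" for m
  proof (cases "lin_mult n d (\<lambda>i. of_bool (c i = 0)) w m = 0")
    case True
    with nz have "u m \<noteq> 0" "zero_deg n c m \<noteq> E"
      by (auto simp: lin_mult_coeff_add Lw zero_deg_part_def split: if_splits)
    with supp show ?thesis by fastforce
  next
    case False
    then obtain m' where "w m' \<noteq> 0" "zero_deg n c m = Suc (zero_deg n c m')"
      using lin_mult_zero_coeffs_nonzero by blast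
    then show ?thesis by (simp add: w_def zero_deg_part_def split: if_splits)
  qed
  with w that show thesis by blast
qed

lemma lin_mult_fill_zeros_onto:
  assumes onto: "lin_mult n d c ` graded_piece n d j = graded_piece n d (Suc j)"
  shows "lin_mult n d (c + (\<lambda>i. of_bool (c i = 0))) ` graded_piece n d j = graded_piece n d (Suc j)"
    (is "?L ` _ = _")
proof
  show "?L ` graded_piece n d j \<subseteq> graded_piece n d (Suc j)"
    using lin_mult_graded by blast
  have sub: "fun_module.subspace (?L ` graded_piece n d j)"
    by (rule module_hom.subspace_image[OF fun_linear_lin_mult subspace_graded_piece])
  have "u \<in> ?L ` graded_piece n d j"
    if "u \<in> graded_piece n d (Suc j)" "\<forall>m. u m \<noteq> 0 \<longrightarrow> Suc (Suc j) - K \<le> zero_deg n c m" for u K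
    using that
  proof (induction K arbitrary: u)
    case 0
    have "u = 0"
    proof
      fix m
      show "u m = 0 m"
        using 0 zero_deg_le_mdeg[of n c m] by (fastforce simp: graded_piece_def)
    qed
    then show ?case using fun_module.subspace_0[OF sub] by (simp only:)
  next
    case (Suc K)
    obtain w where w: "w \<in> graded_piece n d j"
      and supp: "\<forall>m. (u - ?L w) m \<noteq> 0 \<longrightarrow> Suc (Suc (Suc j) - Suc K) \<le> zero_deg n c m"
      using lin_mult_fill_zeros_step[OF onto Suc.prems(1)] Suc.prems(2) by blast
    have "u - ?L w \<in> graded_piece n d (Suc j)"
      using Suc.prems(1) lin_mult_graded[OF w]
      by (rule fun_module.subspace_diff[OF subspace_graded_piece])
    moreover have "\<forall>m. (u - ?L w) m \<noteq> 0 \<longrightarrow> Suc (Suc j) - K \<le> zero_deg n c m"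
      using supp by fastforce
    ultimately have "u - ?L w \<in> ?L ` graded_piece n d j"
      by (rule Suc.IH)
    then have "(u - ?L w) + ?L w \<in> ?L ` graded_piece n d j"
      using w by (intro fun_module.subspace_add[OF sub]) auto
    then show ?case by (simp only: diff_add_cancel)
  qed
  then show "graded_piece n d (Suc j) \<subseteq> ?L ` graded_piece n d j"
    by (metis subsetI diff_self_eq_0 le0)
qed

lemma has_WLP_iff_max_rank_sum_vars_mult:
  "has_WLP TYPE('k::field) n d \<longleftrightarrow>
    (\<forall>j. max_rank (sum_vars_mult n d) (graded_piece n d j) (graded_piece n d (Suc j) :: 'k coeff_fun set))"
    (is "_ \<longleftrightarrow> (\<forall>j. ?rank j)")
proof
  assume "has_WLP TYPE('k) n d"
  then obtain c :: "nat \<Rightarrow> 'k"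
    where c: "\<forall>j. max_rank (lin_mult n d c) (graded_piece n d j) (graded_piece n d (Suc j))"
    unfolding has_WLP_def max_rank_def by blast
  have "max_rank (lin_mult n d (c + (\<lambda>i. of_bool (c i = 0)))) (graded_piece n d j) (graded_piece n d (Suc j))" for j
    using c inj_on_lin_mult_fill_zeros lin_mult_fill_zeros_onto unfolding max_rank_def by blast
  moreover have "\<forall>i<n. (c + (\<lambda>i. of_bool (c i = 0))) i \<noteq> 0"
    by simp
  ultimately show "\<forall>j. ?rank j"
    using max_rank_sum_vars_mult_if_nonzero_coeffs by blast
next
  assume "\<forall>j. ?rank j"
  then show "has_WLP TYPE('k) n d"
    unfolding has_WLP_def max_rank_def by blast
qed

section \<open>Adjoining the last variable\<close>

lemma box_last_zero: "b \<in> box N d \<Longrightarrow> b N = 0"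
  by (simp add: box_def)

lemma box_Suc_upd: "b \<in> box N d \<Longrightarrow> t < d N \<Longrightarrow> b(N := t) \<in> box (Suc N) d"
  unfolding box_def by (auto simp: less_Suc_eq)

lemma box_SucD: "m \<in> box (Suc N) d \<Longrightarrow> m(N := 0) \<in> box N d \<and> m N < d N"
  unfolding box_def by auto

lemma box_decr: "m \<in> box n d \<Longrightarrow> m(i := m i - 1) \<in> box n d"
  unfolding box_def by (auto simp: less_imp_diff_less)

lemma mdeg_Suc_upd: "mdeg (Suc N) (b(N := t)) = mdeg N b + t"
  unfolding mdeg_def by (simp add: sum.cong[OF refl, of _ "b(N := t)" b])

text \<open>slice N d t f is the coefficient of x_N^t in f, an element of the algebra in
  x_0, ..., x_(N-1); lift N d t v is x_N^t v.\<close>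
definition slice :: "nat \<Rightarrow> (nat \<Rightarrow> nat) \<Rightarrow> nat \<Rightarrow> 'k::zero coeff_fun \<Rightarrow> 'k coeff_fun" where
  "slice N d t f = (\<lambda>b. if b \<in> box N d then f (b(N := t)) else 0)"

definition lift :: "nat \<Rightarrow> (nat \<Rightarrow> nat) \<Rightarrow> nat \<Rightarrow> 'k::zero coeff_fun \<Rightarrow> 'k coeff_fun" where
  "lift N d t v = (\<lambda>m. if m \<in> box (Suc N) d \<and> m N = t then v (m(N := 0)) else 0)"

lemma fun_linear_slice: "fun_linear (slice N d t)"
  by (simp add: module_hom_iff fun_module.module_axioms slice_def fun_eq_iff)

lemma slice_graded:
  assumes "f \<in> graded_piece (Suc N) d j"
  shows "slice N d t f \<in> graded_piece N d (j - t)"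
    and "j < t \<Longrightarrow> slice N d t f = 0"
  using assms mdeg_Suc_upd[of N _ t] by (auto simp: graded_piece_def slice_def fun_eq_iff)

lemma lift_graded:
  assumes "v \<in> graded_piece N d k"
  shows "lift N d t v \<in> graded_piece (Suc N) d (k + t)"
  using assms mdeg_Suc_upd[of N _ t]
  by (auto simp: graded_piece_def lift_def) (metis fun_upd_triv fun_upd_upd)

lemma slice_lift:
  assumes "v \<in> graded_piece N d k" "s < d N"
  shows "slice N d s (lift N d t v) = (if s = t then v else 0)"
  using assms box_Suc_upd[of _ N d s] box_last_zero[of _ N d]
  by (auto simp: graded_piece_def slice_def lift_def fun_eq_iff fun_upd_idem)

lemma lift_0:
  assumes "v \<in> graded_piece N d k" "0 < d N"
  shows "lift N d 0 v = v"
  using assms box_last_zero[of _ N d]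
  by (auto simp: graded_piece_def lift_def fun_eq_iff box_def less_Suc_eq fun_upd_idem)

lemma graded_piece_subset_Suc:
  "v \<in> graded_piece N d k \<Longrightarrow> 0 < d N \<Longrightarrow> v \<in> graded_piece (Suc N) d k"
  using lift_graded[of v N d k 0] lift_0[of v N d k] by simp

lemma sum_lift_slice:
  fixes f :: "'k::comm_monoid_add coeff_fun"
  assumes "f \<in> graded_piece (Suc N) d j"
  shows "(\<Sum>t<d N. lift N d t (slice N d t f)) = f"
proof
  fix m
  have "(\<Sum>t<d N. lift N d t (slice N d t f)) m = (\<Sum>t<d N. lift N d t (slice N d t f) m)"
    by (rule sum_fun_apply)
  also have "\<dots> = f m"
  proof (cases "m \<in> box (Suc N) d")
    case True
    then have "lift N d t (slice N d t f) m = (if t = m N then f m else 0)" for t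
      using box_SucD[OF True] by (auto simp: lift_def slice_def)
    then show ?thesis
      using box_SucD[OF True] by simp
  next
    case False
    then show ?thesis
      using assms by (auto simp: lift_def graded_piece_def)
  qed
  finally show "(\<Sum>t<d N. lift N d t (slice N d t f)) m = f m" .
qed

lemma eq_if_slices_eq:
  fixes f g :: "'k::comm_monoid_add coeff_fun"
  assumes "f \<in> graded_piece (Suc N) d j" "g \<in> graded_piece (Suc N) d k"
    and "\<And>t. t < d N \<Longrightarrow> slice N d t f = slice N d t g"
  shows "f = g"
proof -
  have "f = (\<Sum>t<d N. lift N d t (slice N d t f))"
    using sum_lift_slice[OF assms(1)] by simp
  also have "\<dots> = (\<Sum>t<d N. lift N d t (slice N d t g))"
    using assms(3) by (intro sum.cong) auto
  also have "\<dots> = g"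
    using assms(2) by (rule sum_lift_slice)
  finally show ?thesis .
qed

lemma slice_sum_vars_mult:
  fixes f :: "'k::comm_ring_1 coeff_fun"
  assumes "t < d N"
  shows "slice N d t (sum_vars_mult (Suc N) d f)
       = sum_vars_mult N d (slice N d t f) + (if t = 0 then 0 else slice N d (t - 1) f)"
proof
  fix b
  show "slice N d t (sum_vars_mult (Suc N) d f) b
      = (sum_vars_mult N d (slice N d t f) + (if t = 0 then 0 else slice N d (t - 1) f)) b"
  proof (cases "b \<in> box N d")
    case True
    have "slice N d t f (b(i := b i - 1)) = f ((b(N := t))(i := b i - 1))" if "i < N" for i
      using box_decr[OF True, of i] that by (simp add: slice_def fun_upd_twist)
    then have "(\<Sum>i<N. if 0 < (b(N := t)) i then 1 * f ((b(N := t))(i := (b(N := t)) i - 1)) else 0)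
        = sum_vars_mult N d (slice N d t f) b"
      using True by (auto simp: lin_mult_def intro!: sum.cong)
    moreover have "slice N d t (sum_vars_mult (Suc N) d f) b
        = (\<Sum>i<N. if 0 < (b(N := t)) i then 1 * f ((b(N := t))(i := (b(N := t)) i - 1)) else 0)
          + (if 0 < t then f (b(N := t - 1)) else 0)"
      using True box_Suc_upd[OF True assms] by (simp add: slice_def lin_mult_def)
    ultimately show ?thesis
      using True by (simp add: slice_def)
  next
    case False
    then show ?thesis by (simp add: lin_mult_def slice_def)
  qed
qed

lemma sum_vars_mult_lift:
  fixes v :: "'k::comm_ring_1 coeff_fun"
  assumes v: "v \<in> graded_piece N d k"
  shows "sum_vars_mult (Suc N) d (lift N d t v)
       = lift N d t (sum_vars_mult N d v) + lift N d (Suc t) v"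
proof (rule eq_if_slices_eq)
  show "sum_vars_mult (Suc N) d (lift N d t v) \<in> graded_piece (Suc N) d (Suc (k + t))"
    using v by (intro lin_mult_graded lift_graded)
  show "lift N d t (sum_vars_mult N d v) + lift N d (Suc t) v \<in> graded_piece (Suc N) d (Suc k + t)"
    using lift_graded[OF lin_mult_graded[OF v], of t] lift_graded[OF v, of "Suc t"]
    by (intro fun_module.subspace_add[OF subspace_graded_piece]) simp_all
  fix s assume "s < d N"
  then show "slice N d s (sum_vars_mult (Suc N) d (lift N d t v))
      = slice N d s (lift N d t (sum_vars_mult N d v) + lift N d (Suc t) v)"
    by (auto simp: slice_sum_vars_mult slice_lift[OF v] slice_lift[OF lin_mult_graded[OF v]]
        module_hom.add[OF fun_linear_slice] module_hom.zero[OF fun_linear_lin_mult])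
qed

text \<open>Writing L for multiplication by x_0 + ... + x_(N-1) and D = d N, the identity
  (L + x_N) (\<Sum>t<D. (-x_N)^t L^(D-1-t)) = L^D - (-x_N)^D = L^D holds in the quotient by x_N^D.\<close>
definition geom_preimage ::
    "nat \<Rightarrow> (nat \<Rightarrow> nat) \<Rightarrow> 'k::comm_ring_1 coeff_fun \<Rightarrow> 'k coeff_fun" where
  "geom_preimage N d g = (\<Sum>t<d N. lift N d t (\<lambda>b. (-1) ^ t * (sum_vars_mult N d ^^ (d N - 1 - t)) g b))"

lemma scaled_funpow_graded:
  "g \<in> graded_piece N d i \<Longrightarrow> (\<lambda>b. (-1) ^ t * (sum_vars_mult N d ^^ k) g b) \<in> graded_piece N d (i + k)"
  by (intro fun_module.subspace_scale[OF subspace_graded_piece] funpow_lin_mult_graded)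

lemma slice_geom_preimage:
  assumes g: "g \<in> graded_piece N d i" and "s < d N"
  shows "slice N d s (geom_preimage N d g) = (\<lambda>b. (-1) ^ s * (sum_vars_mult N d ^^ (d N - 1 - s)) g b)"
  using assms
  by (simp add: geom_preimage_def module_hom.sum[OF fun_linear_slice]
      slice_lift[OF scaled_funpow_graded[OF g]])

lemma geom_preimage_graded:
  assumes g: "g \<in> graded_piece N d i" and "0 < d N"
  shows "geom_preimage N d g \<in> graded_piece (Suc N) d (i + d N - 1)"
  unfolding geom_preimage_def
proof (intro fun_module.subspace_sum[OF subspace_graded_piece])
  fix t assume "t \<in> {..<d N}"
  then show "lift N d t (\<lambda>b. (-1) ^ t * (sum_vars_mult N d ^^ (d N - 1 - t)) g b)
      \<in> graded_piece (Suc N) d (i + d N - 1)"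
    using lift_graded[OF scaled_funpow_graded[OF g, where t = t and k = "d N - 1 - t"], where t = t]
    by simp
qed

lemma sum_vars_mult_geom_preimage:
  assumes g: "g \<in> graded_piece N d i" and D: "0 < d N"
  shows "sum_vars_mult (Suc N) d (geom_preimage N d g) = (sum_vars_mult N d ^^ d N) g"
proof (rule eq_if_slices_eq)
  show "sum_vars_mult (Suc N) d (geom_preimage N d g) \<in> graded_piece (Suc N) d (Suc (i + d N - 1))"
    using g D by (intro lin_mult_graded geom_preimage_graded)
  show "(sum_vars_mult N d ^^ d N) g \<in> graded_piece (Suc N) d (i + d N)"
    using g D by (intro graded_piece_subset_Suc funpow_lin_mult_graded)
  fix s assume s: "s < d N"
  have top: "slice N d s ((sum_vars_mult N d ^^ d N) g) = (if s = 0 then (sum_vars_mult N d ^^ d N) g else 0)"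
    using slice_lift[OF funpow_lin_mult_graded[OF g] s, of 0] lift_0[OF funpow_lin_mult_graded[OF g] D]
    by simp
  show "slice N d s (sum_vars_mult (Suc N) d (geom_preimage N d g)) = slice N d s ((sum_vars_mult N d ^^ d N) g)"
  proof (cases s)
    case 0
    have "slice N d 0 (sum_vars_mult (Suc N) d (geom_preimage N d g))
        = sum_vars_mult N d ((sum_vars_mult N d ^^ (d N - 1)) g)"
      using D by (simp add: slice_sum_vars_mult slice_geom_preimage[OF g D])
    also have "\<dots> = (sum_vars_mult N d ^^ Suc (d N - 1)) g"
      by simp
    also have "\<dots> = (sum_vars_mult N d ^^ d N) g"
      using D by simp
    finally show ?thesis
      using top 0 by simp
  next
    case (Suc r)
    have "slice N d s (sum_vars_mult (Suc N) d (geom_preimage N d g))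
        = sum_vars_mult N d (\<lambda>b. (-1) ^ s * (sum_vars_mult N d ^^ (d N - 1 - s)) g b)
          + (\<lambda>b. (-1) ^ r * (sum_vars_mult N d ^^ (d N - 1 - r)) g b)"
      using Suc s by (simp add: slice_sum_vars_mult slice_geom_preimage[OF g])
    also have "\<dots> = (\<lambda>b. (-1) ^ s * (sum_vars_mult N d ^^ (d N - 1 - r)) g b)
          + (\<lambda>b. (-1) ^ r * (sum_vars_mult N d ^^ (d N - 1 - r)) g b)"
    proof -
      have "d N - 1 - r = Suc (d N - 1 - s)" using s Suc by simp
      then show ?thesis by (simp only: module_hom.scale[OF fun_linear_lin_mult] funpow.simps comp_apply)
    qed
    also have "\<dots> = 0"
      using Suc by (simp add: fun_eq_iff)
    finally have "slice N d s (sum_vars_mult (Suc N) d (geom_preimage N d g)) = 0" .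
    then show ?thesis
      using top Suc by simp
  qed
qed

lemma slice_from_top:
  fixes f :: "'k::comm_ring_1 coeff_fun"
  assumes high: "\<And>t. 0 < t \<Longrightarrow> t < d N \<Longrightarrow> slice N d t (sum_vars_mult (Suc N) d f) = 0"
    and "k < d N"
  shows "slice N d (d N - 1 - k) f = (\<lambda>b. (-1) ^ k * (sum_vars_mult N d ^^ k) (slice N d (d N - 1) f) b)"
  using \<open>k < d N\<close>
proof (induction k)
  case 0
  show ?case by simp
next
  case (Suc k)
  define t where "t = d N - 1 - k"
  have t: "0 < t" "t < d N" and t1: "d N - 1 - Suc k = t - 1"
    using Suc.prems by (auto simp: t_def)
  have "slice N d (t - 1) f = - sum_vars_mult N d (slice N d t f)"
    using slice_sum_vars_mult[where t = t and N = N and d = d and f = f] t high[OF t]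
    by (simp add: eq_neg_iff_add_eq_0 add.commute)
  also have "\<dots> = - sum_vars_mult N d (\<lambda>b. (-1) ^ k * (sum_vars_mult N d ^^ k) (slice N d (d N - 1) f) b)"
    using Suc by (simp add: t_def)
  also have "\<dots> = (\<lambda>b. (-1) ^ Suc k * (sum_vars_mult N d ^^ Suc k) (slice N d (d N - 1) f) b)"
    by (simp add: module_hom.scale[OF fun_linear_lin_mult] fun_eq_iff)
  finally show ?case
    unfolding t1 .
qed

lemma slice_0_image_from_top:
  fixes f :: "'k::comm_ring_1 coeff_fun"
  assumes high: "\<And>t. 0 < t \<Longrightarrow> t < d N \<Longrightarrow> slice N d t (sum_vars_mult (Suc N) d f) = 0"
    and D: "0 < d N"
  shows "slice N d 0 (sum_vars_mult (Suc N) d f)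
       = (\<lambda>b. (-1) ^ (d N - 1) * (sum_vars_mult N d ^^ d N) (slice N d (d N - 1) f) b)"
proof -
  have "slice N d 0 (sum_vars_mult (Suc N) d f) = sum_vars_mult N d (slice N d 0 f)"
    using D by (simp add: slice_sum_vars_mult)
  also have "slice N d 0 f
      = (\<lambda>b. (-1) ^ (d N - 1) * (sum_vars_mult N d ^^ (d N - 1)) (slice N d (d N - 1) f) b)"
    using slice_from_top[OF high, of "d N - 1"] D by simp
  also have "sum_vars_mult N d \<dots>
      = (\<lambda>b. (-1) ^ (d N - 1) * sum_vars_mult N d ((sum_vars_mult N d ^^ (d N - 1)) (slice N d (d N - 1) f)) b)"
    by (rule module_hom.scale[OF fun_linear_lin_mult])
  also have "sum_vars_mult N d ((sum_vars_mult N d ^^ (d N - 1)) (slice N d (d N - 1) f))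
      = (sum_vars_mult N d ^^ d N) (slice N d (d N - 1) f)"
    using D by (cases "d N") simp_all
  finally show ?thesis .
qed

lemma neg_one_power_scale_eq_0_iff:
  fixes h :: "'a \<Rightarrow> 'k::comm_ring_1"
  shows "(\<lambda>b. (-1) ^ k * h b) = 0 \<longleftrightarrow> h = 0"
  by (simp add: fun_eq_iff minus_one_power_iff)

lemma inj_on_sum_vars_mult_Suc:
  fixes d :: "nat \<Rightarrow> nat"
  assumes D: "0 < d N"
    and inj: "d N \<le> Suc j \<Longrightarrow>
      inj_on (sum_vars_mult N d ^^ d N) (graded_piece N d (Suc j - d N) :: 'k::comm_ring_1 coeff_fun set)"
  shows "inj_on (sum_vars_mult (Suc N) d) (graded_piece (Suc N) d j :: 'k coeff_fun set)"
  unfolding module_hom.inj_on_iff_eq_0[OF fun_linear_lin_mult subspace_graded_piece]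
proof (intro ballI impI)
  fix f :: "'k coeff_fun"
  assume f: "f \<in> graded_piece (Suc N) d j" and ker: "sum_vars_mult (Suc N) d f = 0"
  have high: "slice N d t (sum_vars_mult (Suc N) d f) = 0" for t
    unfolding ker by (rule module_hom.zero[OF fun_linear_slice])
  have top: "slice N d (d N - 1) f = 0"
  proof (cases "d N \<le> Suc j")
    case True
    have "slice N d (d N - 1) f \<in> graded_piece N d (Suc j - d N)"
      using slice_graded(1)[OF f, of "d N - 1"] True D by (simp add: Suc_diff_le)
    moreover have "(sum_vars_mult N d ^^ d N) (slice N d (d N - 1) f) = 0"
      using slice_0_image_from_top[OF high D] high[of 0] by (simp add: neg_one_power_scale_eq_0_iff)
    ultimately show ?thesis
      using inj[OF True] module_hom.inj_on_iff_eq_0[OF fun_linear_funpow[OF fun_linear_lin_mult] subspace_graded_piece]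
      by blast
  next
    case False
    then show ?thesis using slice_graded(2)[OF f] by simp
  qed
  show "f = 0"
  proof (rule eq_if_slices_eq[OF f fun_module.subspace_0[OF subspace_graded_piece]])
    fix t assume "t < d N"
    then have "slice N d t f = (\<lambda>b. (-1) ^ (d N - 1 - t) * (sum_vars_mult N d ^^ (d N - 1 - t)) 0 b)"
      using slice_from_top[OF high, of "d N - 1 - t"] top by simp
    also have "\<dots> = 0"
      by (simp add: module_hom.zero[OF fun_linear_funpow[OF fun_linear_lin_mult]] fun_eq_iff)
    finally show "slice N d t f = slice N d t 0"
      by (simp add: module_hom.zero[OF fun_linear_slice])
  qed
qed

lemma inj_on_funpow_if_inj_on_sum_vars_mult_Suc:
  fixes d :: "nat \<Rightarrow> nat"
  assumes D: "0 < d N"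
    and inj: "inj_on (sum_vars_mult (Suc N) d) (graded_piece (Suc N) d (i + d N - 1) :: 'k::comm_ring_1 coeff_fun set)"
  shows "inj_on (sum_vars_mult N d ^^ d N) (graded_piece N d i :: 'k coeff_fun set)"
  unfolding module_hom.inj_on_iff_eq_0[OF fun_linear_funpow[OF fun_linear_lin_mult] subspace_graded_piece]
proof (intro ballI impI)
  fix g :: "'k coeff_fun"
  assume g: "g \<in> graded_piece N d i" and ker: "(sum_vars_mult N d ^^ d N) g = 0"
  have "sum_vars_mult (Suc N) d (geom_preimage N d g) = sum_vars_mult (Suc N) d 0"
    using sum_vars_mult_geom_preimage[OF g D] ker by (simp add: module_hom.zero[OF fun_linear_lin_mult])
  then have "geom_preimage N d g = 0"
    by (rule inj_onD[OF inj _ geom_preimage_graded[OF g D] fun_module.subspace_0[OF subspace_graded_piece]])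
  then have "(\<lambda>b. (-1) ^ (d N - 1) * g b) = slice N d (d N - 1) 0"
    using slice_geom_preimage[OF g, of "d N - 1"] D by simp
  also have "\<dots> = 0"
    by (rule module_hom.zero[OF fun_linear_slice])
  finally have "(\<lambda>b. (-1) ^ (d N - 1) * g b) = 0" .
  then show "g = 0"
    by (simp only: neg_one_power_scale_eq_0_iff)
qed

lemma funpow_onto_if_sum_vars_mult_Suc_onto:
  fixes d :: "nat \<Rightarrow> nat"
  assumes D: "0 < d N"
    and onto: "sum_vars_mult (Suc N) d ` graded_piece (Suc N) d (i + d N - 1)
      = (graded_piece (Suc N) d (i + d N) :: 'k::comm_ring_1 coeff_fun set)"
  shows "(sum_vars_mult N d ^^ d N) ` graded_piece N d i = (graded_piece N d (i + d N) :: 'k coeff_fun set)"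
proof
  show "(sum_vars_mult N d ^^ d N) ` graded_piece N d i \<subseteq> graded_piece N d (i + d N)"
    using funpow_lin_mult_graded by blast
  show "graded_piece N d (i + d N) \<subseteq> (sum_vars_mult N d ^^ d N) ` (graded_piece N d i :: 'k coeff_fun set)"
  proof
    fix v :: "'k coeff_fun"
    assume v: "v \<in> graded_piece N d (i + d N)"
    then have "v \<in> sum_vars_mult (Suc N) d ` graded_piece (Suc N) d (i + d N - 1)"
      using onto graded_piece_subset_Suc[OF v D] by simp
    then obtain f where f: "f \<in> graded_piece (Suc N) d (i + d N - 1)" and fv: "sum_vars_mult (Suc N) d f = v"
      by blast
    have slice_v: "slice N d t v = (if t = 0 then v else 0)" if "t < d N" for t
      using slice_lift[OF v that, of 0] lift_0[OF v D] by simp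
    have "v = slice N d 0 (sum_vars_mult (Suc N) d f)"
      using slice_v[of 0] D fv by simp
    also have "\<dots> = (\<lambda>b. (-1) ^ (d N - 1) * (sum_vars_mult N d ^^ d N) (slice N d (d N - 1) f) b)"
      using slice_0_image_from_top[where N = N and d = d and f = f] slice_v fv D by simp
    also have "\<dots> = (sum_vars_mult N d ^^ d N) (\<lambda>b. (-1) ^ (d N - 1) * slice N d (d N - 1) f b)"
      by (rule module_hom.scale[OF fun_linear_funpow[OF fun_linear_lin_mult], symmetric])
    finally have "v = (sum_vars_mult N d ^^ d N) (\<lambda>b. (-1) ^ (d N - 1) * slice N d (d N - 1) f b)" .
    moreover have "(\<lambda>b. (-1) ^ (d N - 1) * slice N d (d N - 1) f b) \<in> graded_piece N d i"
      using slice_graded(1)[OF f, of "d N - 1"] D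
      by (auto intro!: fun_module.subspace_scale[OF subspace_graded_piece])
    ultimately show "v \<in> (sum_vars_mult N d ^^ d N) ` graded_piece N d i"
      by blast
  qed
qed

lemma sum_vars_mult_Suc_onto_if_funpow_onto:
  fixes d :: "nat \<Rightarrow> nat"
  assumes D: "0 < d N"
    and onto: "(sum_vars_mult N d ^^ d N) ` graded_piece N d i
      = (graded_piece N d (i + d N) :: 'k::comm_ring_1 coeff_fun set)"
  shows "sum_vars_mult (Suc N) d ` graded_piece (Suc N) d (i + d N - 1)
      = (graded_piece (Suc N) d (i + d N) :: 'k coeff_fun set)"
    (is "?Im = _")
proof
  show "?Im \<subseteq> graded_piece (Suc N) d (i + d N)"
    using lin_mult_graded[of _ "Suc N" d "i + d N - 1"] D by auto
  have sub: "fun_module.subspace ?Im"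
    by (rule module_hom.subspace_image[OF fun_linear_lin_mult subspace_graded_piece])
  have lift_in: "lift N d t v \<in> ?Im" if "t < d N" "v \<in> graded_piece N d (i + d N - t)" for t v
    using that
  proof (induction t arbitrary: v)
    case 0
    then have "v \<in> (sum_vars_mult N d ^^ d N) ` graded_piece N d i"
      using onto by simp
    then obtain g where g: "g \<in> graded_piece N d i" and v: "v = (sum_vars_mult N d ^^ d N) g"
      by blast
    have "lift N d 0 v = sum_vars_mult (Suc N) d (geom_preimage N d g)"
      using lift_0[OF 0(2) D] sum_vars_mult_geom_preimage[OF g D] v by simp
    then show ?case
      using geom_preimage_graded[OF g D] by simp
  next
    case (Suc t)
    have "sum_vars_mult N d v \<in> graded_piece N d (i + d N - t)"
      using lin_mult_graded[OF Suc.prems(2)] Suc.prems(1) by (simp add: Suc_diff_Suc)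
    then have "lift N d t (sum_vars_mult N d v) \<in> ?Im"
      using Suc.IH Suc.prems(1) by simp
    moreover have "sum_vars_mult (Suc N) d (lift N d t v) \<in> ?Im"
      using lift_graded[OF Suc.prems(2), of t] Suc.prems(1) by simp
    ultimately have "sum_vars_mult (Suc N) d (lift N d t v) - lift N d t (sum_vars_mult N d v) \<in> ?Im"
      by (rule fun_module.subspace_diff[OF sub, rotated])
    then show ?case
      by (simp add: sum_vars_mult_lift[OF Suc.prems(2)])
  qed
  show "graded_piece (Suc N) d (i + d N) \<subseteq> ?Im"
  proof
    fix u :: "'k coeff_fun"
    assume u: "u \<in> graded_piece (Suc N) d (i + d N)"
    have "(\<Sum>t<d N. lift N d t (slice N d t u)) \<in> ?Im"
      using lift_in slice_graded(1)[OF u] by (intro fun_module.subspace_sum[OF sub]) simp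
    then show "u \<in> ?Im"
      by (simp only: sum_lift_slice[OF u])
  qed
qed

lemma max_rank_funpow_if_max_rank_Suc:
  fixes d :: "nat \<Rightarrow> nat"
  assumes D: "0 < d N"
    and "max_rank (sum_vars_mult (Suc N) d)
      (graded_piece (Suc N) d (i + d N - 1)) (graded_piece (Suc N) d (i + d N) :: 'k::comm_ring_1 coeff_fun set)"
  shows "max_rank (sum_vars_mult N d ^^ d N)
    (graded_piece N d i) (graded_piece N d (i + d N) :: 'k coeff_fun set)"
  using assms(2) unfolding max_rank_def
  by (elim disjE) (simp_all add: inj_on_funpow_if_inj_on_sum_vars_mult_Suc[where N = N and d = d, OF D]
      funpow_onto_if_sum_vars_mult_Suc_onto[where N = N and d = d, OF D])

lemma max_rank_Suc_if_max_rank_funpow: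
  fixes d :: "nat \<Rightarrow> nat"
  assumes D: "0 < d N"
    and rank: "d N \<le> Suc j \<Longrightarrow> max_rank (sum_vars_mult N d ^^ d N)
      (graded_piece N d (Suc j - d N)) (graded_piece N d (Suc j) :: 'k::comm_ring_1 coeff_fun set)"
  shows "max_rank (sum_vars_mult (Suc N) d)
    (graded_piece (Suc N) d j) (graded_piece (Suc N) d (Suc j) :: 'k coeff_fun set)"
proof (cases "d N \<le> Suc j")
  case True
  define i where "i = Suc j - d N"
  have j: "i + d N - 1 = j" "i + d N = Suc j"
    using True D by (auto simp: i_def)
  from rank[OF True, unfolded max_rank_def i_def[symmetric]] show ?thesis
  proof
    assume "inj_on (sum_vars_mult N d ^^ d N) (graded_piece N d i :: 'k coeff_fun set)"
    then have "inj_on (sum_vars_mult (Suc N) d) (graded_piece (Suc N) d j :: 'k coeff_fun set)"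
      by (intro inj_on_sum_vars_mult_Suc[where N = N and d = d, OF D]) (simp add: i_def)
    then show ?thesis
      by (simp add: max_rank_def)
  next
    assume "(sum_vars_mult N d ^^ d N) ` graded_piece N d i = (graded_piece N d (Suc j) :: 'k coeff_fun set)"
    then have "sum_vars_mult (Suc N) d ` graded_piece (Suc N) d j
        = (graded_piece (Suc N) d (Suc j) :: 'k coeff_fun set)"
      using sum_vars_mult_Suc_onto_if_funpow_onto[where N = N and d = d and i = i, OF D] by (simp add: j)
    then show ?thesis
      by (simp add: max_rank_def)
  qed
next
  case False
  then have "inj_on (sum_vars_mult (Suc N) d) (graded_piece (Suc N) d j :: 'k coeff_fun set)"
    by (intro inj_on_sum_vars_mult_Suc[where N = N and d = d, OF D]) simp
  then show ?thesis
    by (simp add: max_rank_def)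
qed

lemma max_rank_sum_vars_mult_Suc_iff:
  fixes d :: "nat \<Rightarrow> nat"
  assumes D: "0 < d N"
  shows "(\<forall>j. max_rank (sum_vars_mult (Suc N) d)
            (graded_piece (Suc N) d j) (graded_piece (Suc N) d (Suc j) :: 'k::comm_ring_1 coeff_fun set))
    \<longleftrightarrow> (\<forall>i. max_rank (sum_vars_mult N d ^^ d N)
            (graded_piece N d i) (graded_piece N d (i + d N) :: 'k coeff_fun set))"
    (is "(\<forall>j. ?Suc_rank j) \<longleftrightarrow> (\<forall>i. ?rank i)")
proof
  assume Suc_rank: "\<forall>j. ?Suc_rank j"
  show "\<forall>i. ?rank i"
  proof
    fix i
    from Suc_rank have "?Suc_rank (i + d N - 1)" ..
    moreover have "Suc (i + d N - 1) = i + d N"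
      using D by simp
    ultimately show "?rank i"
      using max_rank_funpow_if_max_rank_Suc[where N = N and d = d, OF D] by simp
  qed
next
  assume rank: "\<forall>i. ?rank i"
  show "\<forall>j. ?Suc_rank j"
  proof
    fix j
    show "?Suc_rank j"
      by (rule max_rank_Suc_if_max_rank_funpow[where N = N and d = d, OF D])
        (use rank[rule_format, of "Suc j - d N"] in simp)
  qed
qed

theorem lemma4p7:
  fixes n :: nat and d :: "nat \<Rightarrow> nat"
  assumes "2 \<le> n" and "\<forall>i<n. 0 < d i"
  shows "has_WLP TYPE('k::field) n d \<longleftrightarrow>
    (\<forall>j. inj_on ((lin_mult (n - 1) d (\<lambda>_. 1 :: 'k)) ^^ d (n - 1)) (graded_piece (n - 1) d j)
      \<or> ((lin_mult (n - 1) d (\<lambda>_. 1 :: 'k)) ^^ d (n - 1)) ` graded_piece (n - 1) d j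
          = graded_piece (n - 1) d (j + d (n - 1)))"
proof -
  obtain N where n: "n = Suc N"
    using assms(1) by (cases n) auto
  have "0 < d N"
    using assms(2) n by simp
  then show ?thesis
    using has_WLP_iff_max_rank_sum_vars_mult[where 'k = 'k, of n d]
      max_rank_sum_vars_mult_Suc_iff[where 'k = 'k]
    unfolding n max_rank_def by simp
qed

end
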